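(* Let $X$ be a set of pointed Kripke models, $\Lambda$ a normal modal logic sound with respect to $X$, and $D\subseteq\boldsymbol{\mathcal{L}}_{\Lambda}$ a $\Lambda$-representative descriptor for $X$. Then $X_D=X_{\boldsymbol{\mathcal{L}}_{\Lambda}}$; i.e., for all $x,y\in X$, $y\in\boldsymbol{x}_D$ iff $y\in\boldsymbol{x}_{\boldsymbol{\mathcal{L}}_{\Lambda}}$.
   Context: Signature: countable non-empty sets $\Phi$ (atoms) and $\mathcal{I}$ (indices); modal language $\mathcal{L}$: $\varphi ::= \top\mid p\mid\neg\varphi\mid\varphi\wedge\varphi\mid\Box_i\varphi$, interpreted on pointed Kripke models (countable non-empty state sets, relations $R_i$, atom valuations) with standard semantics. For $\varphi\in\mathcal{L}$, $\boldsymbol{\varphi}$ is the set of formulas $\Lambda$-provably equivalent to $\varphi$ and $\boldsymbol{\mathcal{L}}_{\Lambda}=\{\boldsymbol{\varphi}:\varphi\in\mathcal{L}\}$ (by soundness, $x\models\boldsymbol{\varphi}$ is well defined for $x\in X$). A descriptor for $X$ is any $D\subseteq\boldsymbol{\mathcal{L}}_{\Lambda}$; $\boldsymbol{x}_D=\{y\in X:\forall\boldsymbol{\varphi}\in D,\ y\models\varphi\iff x\models\varphi\}$ and $X_D=\{\boldsymbol{x}_D:x\in X\}$. $D$ is $\Lambda$-representative if for every $\varphi\in\mathcal{L}$ there is $\{\boldsymbol{\psi}_i\}_{i\in I}\subseteq D$ such that for every $J\subseteq I$ the set $\{\psi_i\}_{i\in J}\cup\{\neg\psi_i\}_{i\in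 I\setminus J}$ $\Lambda$-entails $\varphi$ or $\neg\varphi$. *)

theory Defs
  imports "HOL-Library.Countable"
begin

datatype ('p, 'i) form =
    Top
  | Atom 'p
  | Neg "('p, 'i) form"
  | Conj "('p, 'i) form" "('p, 'i) form"
  | Box 'i "('p, 'i) form"

definition Imp :: "('p, 'i) form \<Rightarrow> ('p, 'i) form \<Rightarrow> ('p, 'i) form" where
  "Imp a b = Neg (Conj a (Neg b))"

definition Iff :: "('p, 'i) form \<Rightarrow> ('p, 'i) form \<Rightarrow> ('p, 'i) form" where
  "Iff a b = Conj (Imp a b) (Imp b a)"

fun conj_list :: "('p, 'i) form list \<Rightarrow> ('p, 'i) form" where
  "conj_list [] = Top"
| "conj_list (a # as) = Conj a (conj_list as)"

section \<open>Kripke models (countable state sets represented as subsets of nat)\<close>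

record ('p, 'i) kmodel =
  W :: "nat set"
  R :: "'i \<Rightarrow> nat \<Rightarrow> nat \<Rightarrow> bool"
  V :: "'p \<Rightarrow> nat \<Rightarrow> bool"

type_synonym ('p, 'i) pointed = "('p, 'i) kmodel \<times> nat"

definition wf_pointed :: "('p, 'i) pointed \<Rightarrow> bool" where
  "wf_pointed x \<longleftrightarrow> W (fst x) \<noteq> {} \<and> snd x \<in> W (fst x) \<and>
     (\<forall>i u v. R (fst x) i u v \<longrightarrow> u \<in> W (fst x) \<and> v \<in> W (fst x))"

fun sat :: "('p, 'i) kmodel \<Rightarrow> nat \<Rightarrow> ('p, 'i) form \<Rightarrow> bool" where
  "sat M w Top = True"
| "sat M w (Atom p) = V M p w"
| "sat M w (Neg a) = (\<not> sat M w a)"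
| "sat M w (Conj a b) = (sat M w a \<and> sat M w b)"
| "sat M w (Box i a) = (\<forall>v. R M i w v \<longrightarrow> v \<in> W M \<longrightarrow> sat M v a)"

definition psat :: "('p, 'i) pointed \<Rightarrow> ('p, 'i) form \<Rightarrow> bool" (infix "\<Turnstile>" 50) where
  "x \<Turnstile> a \<longleftrightarrow> sat (fst x) (snd x) a"

text \<open>Propositional tautologies: boxed subformulas are treated as propositional atoms.\<close>
fun peval :: "(('p, 'i) form \<Rightarrow> bool) \<Rightarrow> ('p, 'i) form \<Rightarrow> bool" where
  "peval v Top = True"
| "peval v (Atom p) = v (Atom p)"
| "peval v (Neg a) = (\<not> peval v a)"
| "peval v (Conj a b) = (peval v a \<and> peval v b)"
| "peval v (Box i a) = v (Box i a)"

definition tautology :: "('p, 'i) form \<Rightarrow> bool" where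
  "tautology a \<longleftrightarrow> (\<forall>v. peval v a)"

fun subst :: "('p \<Rightarrow> ('p, 'i) form) \<Rightarrow> ('p, 'i) form \<Rightarrow> ('p, 'i) form" where
  "subst s Top = Top"
| "subst s (Atom p) = s p"
| "subst s (Neg a) = Neg (subst s a)"
| "subst s (Conj a b) = Conj (subst s a) (subst s b)"
| "subst s (Box i a) = Box i (subst s a)"

definition normal_logic :: "('p, 'i) form set \<Rightarrow> bool" where
  "normal_logic L \<longleftrightarrow>
     (\<forall>a. tautology a \<longrightarrow> a \<in> L) \<and>
     (\<forall>i a b. Imp (Box i (Imp a b)) (Imp (Box i a) (Box i b)) \<in> L) \<and>
     (\<forall>a b. a \<in> L \<longrightarrow> Imp a b \<in> L \<longrightarrow> b \<in> L) \<and>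
     (\<forall>i a. a \<in> L \<longrightarrow> Box i a \<in> L) \<and>
     (\<forall>s a. a \<in> L \<longrightarrow> subst s a \<in> L)"

definition sound_wrt :: "('p, 'i) form set \<Rightarrow> ('p, 'i) pointed set \<Rightarrow> bool" where
  "sound_wrt L X \<longleftrightarrow> (\<forall>a \<in> L. \<forall>x \<in> X. x \<Turnstile> a)"

definition cls :: "('p, 'i) form set \<Rightarrow> ('p, 'i) form \<Rightarrow> ('p, 'i) form set" where
  "cls L a = {b. Iff a b \<in> L}"

definition Lang :: "('p, 'i) form set \<Rightarrow> ('p, 'i) form set set" where
  "Lang L = range (cls L)"

text \<open>Truth of an equivalence class (well defined by soundness).\<close>
definition csat :: "('p, 'i) pointed \<Rightarrow> ('p, 'i) form set \<Rightarrow> bool" where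
  "csat x c \<longleftrightarrow> (\<exists>a \<in> c. x \<Turnstile> a)"

definition cell :: "('p, 'i) pointed set \<Rightarrow> ('p, 'i) form set set \<Rightarrow> ('p, 'i) pointed \<Rightarrow> ('p, 'i) pointed set" where
  "cell X D x = {y \<in> X. \<forall>c \<in> D. csat y c \<longleftrightarrow> csat x c}"

definition partition :: "('p, 'i) pointed set \<Rightarrow> ('p, 'i) form set set \<Rightarrow> ('p, 'i) pointed set set" where
  "partition X D = cell X D ` X"

definition entails :: "('p, 'i) form set \<Rightarrow> ('p, 'i) form set \<Rightarrow> ('p, 'i) form \<Rightarrow> bool" where
  "entails L G a \<longleftrightarrow> (\<exists>xs. set xs \<subseteq> G \<and> Imp (conj_list xs) a \<in> L)"

definition representative :: "('p, 'i) form set \<Rightarrow> ('p, 'i) form set set \<Rightarrow> bool" where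
  "representative L D \<longleftrightarrow>
     (\<forall>a. \<exists>Psi. cls L ` Psi \<subseteq> D \<and>
        (\<forall>J \<subseteq> Psi. entails L (J \<union> Neg ` (Psi - J)) a \<or>
                   entails L (J \<union> Neg ` (Psi - J)) (Neg a)))"

end

theory Submission
  imports Defs
begin

text \<open>Two points of X that agree on every formula of a family \<Psi> satisfy the same sign
  pattern over \<Psi>. If D is representative, that pattern entails either \<phi> or \<not>\<phi>, and by
  soundness both points then agree on \<phi>. So points indistinguishable by D are
  indistinguishable by the whole language, while the converse is trivial since
  D is contained in the language.\<close>

lemma sat_Imp [simp]: "x \<Turnstile> Imp a b \<longleftrightarrow> (x \<Turnstile> a \<longrightarrow> x \<Turnstile> b)"
  by (simp add: psat_def Imp_def)

lemma sat_Iff [simp]: "x \<Turnstile> Iff a b \<longleftrightarrow> (x \<Turnstile> a \<longleftrightarrow> x \<Turnstile> b)"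
  by (auto simp: psat_def Iff_def Imp_def)

lemma sat_Neg [simp]: "x \<Turnstile> Neg a \<longleftrightarrow> \<not> x \<Turnstile> a"
  by (simp add: psat_def)

lemma sat_conj_list [simp]: "x \<Turnstile> conj_list xs \<longleftrightarrow> (\<forall>a \<in> set xs. x \<Turnstile> a)"
  by (induction xs) (auto simp: psat_def)

lemma normal_logic_Iff_refl:
  assumes "normal_logic L"
  shows "Iff a a \<in> L"
proof -
  have "tautology (Iff a a)" by (simp add: tautology_def Iff_def Imp_def)
  with assms show ?thesis unfolding normal_logic_def by blast
qed

lemma sound_sat:
  assumes "sound_wrt L X" "a \<in> L" "x \<in> X"
  shows "x \<Turnstile> a"
  using assms unfolding sound_wrt_def by blast

lemma csat_cls:
  assumes "normal_logic L" "sound_wrt L X" "x \<in> X"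
  shows "csat x (cls L a) \<longleftrightarrow> x \<Turnstile> a"
proof
  assume "csat x (cls L a)"
  then obtain b where "Iff a b \<in> L" "x \<Turnstile> b" unfolding csat_def cls_def by blast
  with sound_sat[OF assms(2) _ assms(3)] show "x \<Turnstile> a" by fastforce
next
  assume "x \<Turnstile> a"
  moreover have "a \<in> cls L a" using normal_logic_Iff_refl[OF assms(1)] by (simp add: cls_def)
  ultimately show "csat x (cls L a)" unfolding csat_def by blast
qed

lemma sound_entails:
  assumes "sound_wrt L X" "x \<in> X" "\<forall>q \<in> G. x \<Turnstile> q" "entails L G b"
  shows "x \<Turnstile> b"
proof -
  obtain xs where "set xs \<subseteq> G" "Imp (conj_list xs) b \<in> L"
    using assms(4) unfolding entails_def by blast
  with sound_sat[OF assms(1) _ assms(2)] assms(3) show ?thesis by fastforce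
qed

definition sign_pattern :: "('p, 'i) pointed \<Rightarrow> ('p, 'i) form set \<Rightarrow> ('p, 'i) form set" where
  "sign_pattern x Psi = {p \<in> Psi. x \<Turnstile> p} \<union> Neg ` (Psi - {p \<in> Psi. x \<Turnstile> p})"

lemma sat_sign_pattern: "q \<in> sign_pattern x Psi \<Longrightarrow> x \<Turnstile> q"
  by (auto simp: sign_pattern_def)

lemma sign_pattern_cong:
  assumes "\<forall>p \<in> Psi. y \<Turnstile> p \<longleftrightarrow> x \<Turnstile> p"
  shows "sign_pattern y Psi = sign_pattern x Psi"
proof -
  have "{p \<in> Psi. y \<Turnstile> p} = {p \<in> Psi. x \<Turnstile> p}" using assms by blast
  thus ?thesis by (simp add: sign_pattern_def)
qed

lemma agree_if_pattern_decides:
  assumes "sound_wrt L X" "x \<in> X" "y \<in> X"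
    and agree: "\<forall>p \<in> Psi. y \<Turnstile> p \<longleftrightarrow> x \<Turnstile> p"
    and decides: "entails L (sign_pattern x Psi) a \<or> entails L (sign_pattern x Psi) (Neg a)"
  shows "y \<Turnstile> a \<longleftrightarrow> x \<Turnstile> a"
proof -
  have entailed: "x \<Turnstile> b \<and> y \<Turnstile> b" if "entails L (sign_pattern x Psi) b" for b
    using sound_entails[OF assms(1,2) _ that] sound_entails[OF assms(1,3) _ that]
      sat_sign_pattern sign_pattern_cong[OF agree] by metis
  from decides show ?thesis
    using entailed[of a] entailed[of "Neg a"] by auto
qed

lemma representative_agree:
  assumes L: "normal_logic L" and S: "sound_wrt L X" and R: "representative L D"
    and "x \<in> X" "y \<in> X"
    and agree: "\<forall>c \<in> D. csat y c \<longleftrightarrow> csat x c"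
  shows "y \<Turnstile> a \<longleftrightarrow> x \<Turnstile> a"
proof -
  obtain Psi where "cls L ` Psi \<subseteq> D" and
    decides: "\<forall>J \<subseteq> Psi. entails L (J \<union> Neg ` (Psi - J)) a \<or>
                         entails L (J \<union> Neg ` (Psi - J)) (Neg a)"
    using R unfolding representative_def by meson
  have "\<forall>p \<in> Psi. y \<Turnstile> p \<longleftrightarrow> x \<Turnstile> p"
  proof
    fix p assume "p \<in> Psi"
    with \<open>cls L ` Psi \<subseteq> D\<close> agree have "csat y (cls L p) \<longleftrightarrow> csat x (cls L p)" by blast
    then show "y \<Turnstile> p \<longleftrightarrow> x \<Turnstile> p"
      by (simp only: csat_cls[OF L S \<open>x \<in> X\<close>] csat_cls[OF L S \<open>y \<in> X\<close>])
  qed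
  moreover have "entails L (sign_pattern x Psi) a \<or> entails L (sign_pattern x Psi) (Neg a)"
    using decides[rule_format, of "{p \<in> Psi. x \<Turnstile> p}"] unfolding sign_pattern_def by simp
  ultimately show ?thesis using agree_if_pattern_decides[OF S \<open>x \<in> X\<close> \<open>y \<in> X\<close>] by blast
qed

lemma cell_representative_eq:
  assumes L: "normal_logic L" and S: "sound_wrt L X"
    and "D \<subseteq> Lang L" and R: "representative L D" and "x \<in> X"
  shows "cell X D x = cell X (Lang L) x"
proof
  show "cell X (Lang L) x \<subseteq> cell X D x"
    using \<open>D \<subseteq> Lang L\<close> unfolding cell_def by blast
next
  show "cell X D x \<subseteq> cell X (Lang L) x"
  proof
    fix y assume "y \<in> cell X D x"
    then have "y \<in> X" and agree: "\<forall>c \<in> D. csat y c \<longleftrightarrow> csat x c"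
      unfolding cell_def by simp_all
    have "csat y (cls L a) \<longleftrightarrow> csat x (cls L a)" for a
      by (simp only: csat_cls[OF L S \<open>x \<in> X\<close>] csat_cls[OF L S \<open>y \<in> X\<close>]
          representative_agree[OF L S R \<open>x \<in> X\<close> \<open>y \<in> X\<close> agree])
    with \<open>y \<in> X\<close> show "y \<in> cell X (Lang L) x" unfolding cell_def Lang_def by blast
  qed
qed

theorem lemma9:
  fixes X :: "('p::countable, 'i::countable) pointed set"
    and L :: "('p, 'i) form set"
    and D :: "('p, 'i) form set set"
  assumes "\<forall>x \<in> X. wf_pointed x"
    and "normal_logic L"
    and "sound_wrt L X"
    and "D \<subseteq> Lang L"
    and "representative L D"
  shows "partition X D = partition X (Lang L) \<and>
         (\<forall>x \<in> X. \<forall>y \<in> X. y \<in> cell X D x \<longleftrightarrow> y \<in> cell X (Lang L) x)"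
proof -
  have cells: "cell X D x = cell X (Lang L) x" if "x \<in> X" for x
    using cell_representative_eq[OF assms(2-5) that] .
  then have "partition X D = partition X (Lang L)"
    unfolding partition_def by (rule image_cong[OF refl])
  with cells show ?thesis by simp
qed

end
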